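(* Let $G$ be a finite simple graph with vertex set $[n]$ and let $\lambda>0$. Then $\mathrm{PRSforIS}_f(G,\lambda)$ terminates with probability $1$, for any choice function $f$. On termination, $\mathbf X$ is the indicator vector of an independent set $I$ of $G$, distributed according to the Gibbs (hard-core) distribution $\Pr(I)=\lambda^{|I|}/\sum_{J}\lambda^{|J|}$, where $J$ ranges over all independent sets of $G$, including $\emptyset$.
   Context: Variables $\mathbf X=(X_v:v\in[n])$ take values in $\{0,1\}$; $\mathbf X$ encodes the vertex set $\{v:X_v=1\}$. Under the product distribution, each $X_v$ is independently $1$ with probability $\lambda/(1+\lambda)$. For $S\subseteq[n]$, $\partial S=\{v\notin S:\ v\text{ is adjacent to some }u\in S\}$ and $\overline S=S\cup\partial S$. Let $\mathcal C$ be the family of sets $S\subseteq[n]$ with $|S|\ge2$ such that the induced subgraph $G[S]$ is connected. A set $S\in\mathcal C$ is a cluster (for the current $\mathbf X$) if $X_v=1$ for all $v\in S$ and $X_v=0$ for all $v\in\partial S$. $\mathbf X$ encodes an independent set iff there is no cluster. Algorithm $\mathrm{PRSforIS}_f(G,\lambda)$: fix a function $f$ assigning to each nonempty family $\mathcal N\subseteq\mathcal C$ an element $f(\mathcal N)\in\mathcal N$. Sample $\mathbf X$ from the product distribution. While $\mathbf X$ does not encode an independent set, let $\mathcal N$ be the set of current clusters, let $S=f(\mathcal N)$, and resample all $X_v$, $v\in\overline S$, independently as Bernoulli$(\lambda/(1+\lambda))$. *)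

theory Defs
  imports "HOL-Probability.Probability"
begin

text \<open>Simple graph on vertex set [n] = {1..n}, given by an adjacency relation E.
  A configuration X (a 0/1 vector indexed by [n]) is represented by the set {v. X_v = 1}.\<close>

definition vset :: "nat \<Rightarrow> nat set" where
  "vset n = {1..n}"

definition simple_graph :: "nat \<Rightarrow> (nat \<Rightarrow> nat \<Rightarrow> bool) \<Rightarrow> bool" where
  "simple_graph n E \<longleftrightarrow> (\<forall>u v. E u v \<longrightarrow> E v u) \<and> (\<forall>v. \<not> E v v)
     \<and> (\<forall>u v. E u v \<longrightarrow> u \<in> vset n \<and> v \<in> vset n)"

definition bdry :: "nat \<Rightarrow> (nat \<Rightarrow> nat \<Rightarrow> bool) \<Rightarrow> nat set \<Rightarrow> nat set" where
  "bdry n E S = {v \<in> vset n. v \<notin> S \<and> (\<exists>u\<in>S. E u v)}"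

definition clos :: "nat \<Rightarrow> (nat \<Rightarrow> nat \<Rightarrow> bool) \<Rightarrow> nat set \<Rightarrow> nat set" where
  "clos n E S = S \<union> bdry n E S"

definition induced_connected :: "(nat \<Rightarrow> nat \<Rightarrow> bool) \<Rightarrow> nat set \<Rightarrow> bool" where
  "induced_connected E S \<longleftrightarrow>
     (\<forall>u\<in>S. \<forall>v\<in>S. (\<lambda>a b. a \<in> S \<and> b \<in> S \<and> E a b)\<^sup>*\<^sup>* u v)"

definition conn_family :: "nat \<Rightarrow> (nat \<Rightarrow> nat \<Rightarrow> bool) \<Rightarrow> nat set set" where
  "conn_family n E = {S. S \<subseteq> vset n \<and> 2 \<le> card S \<and> induced_connected E S}"

definition is_cluster :: "nat \<Rightarrow> (nat \<Rightarrow> nat \<Rightarrow> bool) \<Rightarrow> nat set \<Rightarrow> nat set \<Rightarrow> bool" where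
  "is_cluster n E X S \<longleftrightarrow> S \<in> conn_family n E \<and> S \<subseteq> X \<and> bdry n E S \<inter> X = {}"

definition clusters :: "nat \<Rightarrow> (nat \<Rightarrow> nat \<Rightarrow> bool) \<Rightarrow> nat set \<Rightarrow> nat set set" where
  "clusters n E X = {S. is_cluster n E X S}"

definition indep_set :: "nat \<Rightarrow> (nat \<Rightarrow> nat \<Rightarrow> bool) \<Rightarrow> nat set \<Rightarrow> bool" where
  "indep_set n E I \<longleftrightarrow> I \<subseteq> vset n \<and> (\<forall>u\<in>I. \<forall>v\<in>I. \<not> E u v)"

definition choice_fun :: "nat \<Rightarrow> (nat \<Rightarrow> nat \<Rightarrow> bool) \<Rightarrow> (nat set set \<Rightarrow> nat set) \<Rightarrow> bool" where
  "choice_fun n E f \<longleftrightarrow> (\<forall>N. N \<noteq> {} \<and> N \<subseteq> conn_family n E \<longrightarrow> f N \<in> N)"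

definition prod_sample :: "real \<Rightarrow> nat set \<Rightarrow> nat set pmf" where
  "prod_sample lam T =
     map_pmf (\<lambda>g. {v \<in> T. g v}) (Pi_pmf T False (\<lambda>_. bernoulli_pmf (lam / (1 + lam))))"

text \<open>one iteration of the while loop (an independent set is absorbing = loop exited)\<close>
definition prs_step ::
  "nat \<Rightarrow> (nat \<Rightarrow> nat \<Rightarrow> bool) \<Rightarrow> real \<Rightarrow> (nat set set \<Rightarrow> nat set) \<Rightarrow> nat set \<Rightarrow> nat set pmf" where
  "prs_step n E lam f X =
     (if indep_set n E X then return_pmf X
      else (let T = clos n E (f (clusters n E X))
            in map_pmf (\<lambda>Y. (X - T) \<union> Y) (prod_sample lam T)))"

primrec prs_state ::
  "nat \<Rightarrow> (nat \<Rightarrow> nat \<Rightarrow> bool) \<Rightarrow> real \<Rightarrow> (nat set set \<Rightarrow> nat set) \<Rightarrow> nat \<Rightarrow> nat set pmf" where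
  "prs_state n E lam f 0 = prod_sample lam (vset n)"
| "prs_state n E lam f (Suc k) = bind_pmf (prs_state n E lam f k) (prs_step n E lam f)"

end

theory Submission
  imports Defs
begin

(* Track along a run the union R of all resampled closures. A run
  that resampled exactly R leaves the initial state unchanged outside R, and it makes the same
  choices of clusters from every state that agrees with it on R and is independent outside R.
  Exchanging the final independent set I for another one I' therefore changes the probability of
  the run by the factor lam^|I'| / lam^|I|: outside R through the initial product distribution, on R
  through the last resampling of each vertex. So the probability of ending in I is proportional to
  lam^|I|. For termination, resampling a chosen closure to all zeros has probability at least
  (1 + lam)^-n and removes an occupied vertex, so every n + 1 steps the run stops with probability
  bounded away from 0. *)

definition prod_weight :: "real \<Rightarrow> 'a set \<Rightarrow> 'a set \<Rightarrow> real" where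
  "prod_weight lam T Y = (if Y \<subseteq> T then lam ^ card Y / (1 + lam) ^ card T else 0)"

lemma prod_weight_nonneg: "lam > 0 \<Longrightarrow> prod_weight lam T Y \<ge> 0"
  by (simp add: prod_weight_def)

lemma set_pmf_prod_sample: "set_pmf (prod_sample lam T) \<subseteq> Pow T"
  by (auto simp: prod_sample_def)

lemma pmf_prod_sample:
  assumes T: "finite T" and lam: "lam > 0"
  shows "pmf (prod_sample lam T) Y = prod_weight lam T Y"
proof (cases "Y \<subseteq> T")
  case True
  define p where "p = lam / (1 + lam)"
  define M where "M = Pi_pmf T False (\<lambda>_. bernoulli_pmf p)"
  define h where "h = (\<lambda>g :: nat \<Rightarrow> bool. {v \<in> T. g v})"
  define g where "g v = (v \<in> Y)" for v
  have p01: "0 \<le> p" "p \<le> 1" using lam by (auto simp: p_def)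
  have inj: "inj_on h (set_pmf M)"
  proof (rule inj_onI)
    fix g1 g2 assume "g1 \<in> set_pmf M" "g2 \<in> set_pmf M" "h g1 = h g2"
    then show "g1 = g2"
      using set_Pi_pmf_subset[OF T, of False "\<lambda>_. bernoulli_pmf p"]
      by (auto simp: M_def h_def fun_eq_iff set_eq_iff)
  qed
  have "pmf M g = (\<Prod>v\<in>T. pmf (bernoulli_pmf p) (g v))"
    unfolding M_def using True by (intro pmf_Pi' T) (auto simp: g_def)
  also have "\<dots> = (\<Prod>v\<in>Y. pmf (bernoulli_pmf p) (g v)) * (\<Prod>v\<in>T - Y. pmf (bernoulli_pmf p) (g v))"
    using True T by (metis Diff_partition Diff_disjoint finite_Diff finite_subset prod.union_disjoint inf.commute)
  also have "\<dots> = p ^ card Y * (1 - p) ^ card (T - Y)"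
    using p01 by (simp add: g_def)
  also have "\<dots> = lam ^ card Y / (1 + lam) ^ card T"
  proof -
    have "card T = card Y + card (T - Y)"
      using True T by (metis card_Diff_subset finite_subset card_mono le_add_diff_inverse)
    moreover have "1 - p = 1 / (1 + lam)" using lam by (simp add: p_def field_simps)
    ultimately show ?thesis using lam by (simp add: p_def power_add power_divide field_simps)
  qed
  finally have pmf_g: "pmf M g = lam ^ card Y / (1 + lam) ^ card T" .
  then have "g \<in> set_pmf M" using lam by (simp add: set_pmf_eq)
  moreover have "h g = Y" using True by (auto simp: h_def g_def)
  moreover have "prod_sample lam T = map_pmf h M" by (simp add: prod_sample_def h_def M_def p_def)
  ultimately show ?thesis using True pmf_map_inj[OF inj] pmf_g by (metis prod_weight_def)
next
  case False
  then have "Y \<notin> set_pmf (prod_sample lam T)" using set_pmf_prod_sample by blast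
  then show ?thesis using False by (simp add: prod_weight_def set_pmf_eq)
qed

lemma pmf_bind_pmf_sum:
  assumes "finite S" "set_pmf M \<subseteq> S"
  shows "pmf (bind_pmf M g) x = (\<Sum>a\<in>S. pmf M a * pmf (g a) x)"
proof -
  have "pmf (bind_pmf M g) x = (\<Sum>a\<in>S. pmf (g a) x * pmf M a)"
    unfolding pmf_bind using assms by (intro integral_measure_pmf_real) auto
  then show ?thesis by (simp add: mult.commute)
qed

lemma prob_bind_pmf_sum:
  assumes "finite S" "set_pmf M \<subseteq> S" and A: "finite A"
  shows "measure_pmf.prob (bind_pmf M g) A = (\<Sum>a\<in>S. pmf M a * measure_pmf.prob (g a) A)"
  using assms
  by (simp add: measure_measure_pmf_finite[OF A] pmf_bind_pmf_sum sum.swap[of _ A] sum_distrib_left)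

text \<open>The map Y \<mapsto> (Y \<inter> K) \<union> (I' \<inter> (U - K)) sends the support of the left-hand sum
  injectively into the right-hand sum and multiplies the product weight by
  lam^|I' \<inter> (U - K)| / lam^|I \<inter> (U - K)|.\<close>

lemma prod_weight_sum_swap_le:
  fixes F F' :: "'a set \<Rightarrow> real"
  assumes U: "finite U" and K: "finite K" and lam: "lam > 0"
    and F'_nonneg: "\<And>Z. F' Z \<ge> 0"
    and B: "B \<inter> U = {}" and B': "B' \<inter> U = {}" and agree: "B \<inter> K = B' \<inter> K"
    and outside: "B' - (U \<union> K) = I' - (U \<union> K)"
    and support: "\<And>Y. Y \<subseteq> U \<Longrightarrow> F (B \<union> Y) \<noteq> 0 \<Longrightarrow> (B \<union> Y) - K = I - K"
    and swap: "\<And>Y W. Y \<subseteq> U \<Longrightarrow> (B \<union> Y) \<inter> K = W \<inter> K \<Longrightarrow> W - K = I' - K \<Longrightarrow>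
                 F (B \<union> Y) * lam ^ card (I' \<inter> K) \<le> F' W * lam ^ card (I \<inter> K)"
  shows "(\<Sum>Y\<in>Pow U. prod_weight lam U Y * F (B \<union> Y)) * lam ^ card (I' \<inter> (U \<union> K))
       \<le> (\<Sum>Y\<in>Pow U. prod_weight lam U Y * F' (B' \<union> Y)) * lam ^ card (I \<inter> (U \<union> K))"
proof -
  define D where "D = {Y \<in> Pow U. Y \<inter> (U - K) = I \<inter> (U - K)}"
  define swp where "swp J Y = Y \<inter> K \<union> J \<inter> (U - K)" for J Y :: "'a set"
  let ?a = "\<lambda>Y. prod_weight lam U Y * F (B \<union> Y) * lam ^ card (I' \<inter> (U \<union> K))"
  let ?b = "\<lambda>Y. prod_weight lam U Y * F' (B' \<union> Y) * lam ^ card (I \<inter> (U \<union> K))"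
  have card_split: "card (J \<inter> (U \<union> K)) = card (J \<inter> K) + card (J \<inter> (U - K))" for J
  proof -
    have "J \<inter> (U \<union> K) = (J \<inter> K) \<union> (J \<inter> (U - K))" by blast
    then show ?thesis using U K by (simp add: card_Un_disjoint disjoint_iff)
  qed
  have "?a Y = 0" if "Y \<in> Pow U - D" for Y
  proof -
    have "F (B \<union> Y) = 0"
    proof (rule ccontr)
      assume "F (B \<union> Y) \<noteq> 0"
      then have "(B \<union> Y) - K = I - K" using that support by blast
      then show False using that B by (auto simp: D_def)
    qed
    then show ?thesis by simp
  qed
  then have "(\<Sum>Y\<in>Pow U. ?a Y) = (\<Sum>Y\<in>D. ?a Y)"
    using U by (intro sum.mono_neutral_right) (auto simp: D_def)
  also have "\<dots> \<le> (\<Sum>Y\<in>Pow U. ?b Y)"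
  proof (rule sum_le_included[where i = "swp I"])
    show "finite D" "finite (Pow U)" using U by (auto simp: D_def)
    show "\<forall>Y\<in>Pow U. 0 \<le> ?b Y"
      using lam F'_nonneg by (simp add: prod_weight_nonneg)
    show "\<forall>Y\<in>D. \<exists>Y'\<in>Pow U. swp I Y' = Y \<and> ?a Y \<le> ?b Y'"
    proof
      fix Y assume "Y \<in> D"
      then have Y: "Y \<subseteq> U" "Y \<inter> (U - K) = I \<inter> (U - K)" by (auto simp: D_def)
      define Y' where "Y' = swp I' Y"
      have Y': "Y' \<subseteq> U" "swp I Y' = Y" using Y by (auto simp: Y'_def swp_def)
      have "finite Y" using Y(1) U finite_subset by blast
      have card_Y: "card Y = card (Y \<inter> K) + card (I \<inter> (U - K))"
      proof -
        have "Y = (Y \<inter> K) \<union> (I \<inter> (U - K))" using Y by blast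
        then have "card Y = card ((Y \<inter> K) \<union> (I \<inter> (U - K)))" by simp
        also have "\<dots> = card (Y \<inter> K) + card (I \<inter> (U - K))"
          using \<open>finite Y\<close> U by (intro card_Un_disjoint) auto
        finally show ?thesis .
      qed
      have card_Y': "card Y' = card (Y \<inter> K) + card (I' \<inter> (U - K))"
        unfolding Y'_def swp_def using \<open>finite Y\<close> U by (intro card_Un_disjoint) auto
      have swap_Y: "F (B \<union> Y) * lam ^ card (I' \<inter> K) \<le> F' (B' \<union> Y') * lam ^ card (I \<inter> K)"
      proof (rule swap[OF Y(1)])
        show "(B \<union> Y) \<inter> K = (B' \<union> Y') \<inter> K" using agree by (auto simp: Y'_def swp_def)
        show "(B' \<union> Y') - K = I' - K" using outside B' by (auto simp: Y'_def swp_def)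
      qed
      define c where "c = lam ^ (card (Y \<inter> K) + card (I \<inter> (U - K)) + card (I' \<inter> (U - K)))
        / (1 + lam) ^ card U"
      have a_eq: "?a Y = c * (F (B \<union> Y) * lam ^ card (I' \<inter> K))"
        using Y(1) by (simp add: prod_weight_def c_def card_Y card_split power_add mult_ac)
      have b_eq: "?b Y' = c * (F' (B' \<union> Y') * lam ^ card (I \<inter> K))"
        using Y'(1) by (simp add: prod_weight_def c_def card_Y' card_split power_add mult_ac)
      have "c \<ge> 0" using lam by (simp add: c_def)
      then have "?a Y \<le> ?b Y'" unfolding a_eq b_eq using swap_Y by (rule mult_left_mono[rotated])
      then show "\<exists>Y'\<in>Pow U. swp I Y' = Y \<and> ?a Y \<le> ?b Y'" using Y' by blast
    qed
  qed
  finally show ?thesis by (simp add: sum_distrib_right)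
qed

lemma LIMSEQ_one_if_incseq_contracting:
  fixes p :: "nat \<Rightarrow> real"
  assumes inc: "incseq p" and le1: "\<And>k. p k \<le> 1" and r: "0 \<le> r" "r < 1"
    and contract: "\<And>k. 1 - p (k + M) \<le> r * (1 - p k)"
  shows "p \<longlonglongrightarrow> 1"
proof (rule LIMSEQ_I)
  fix e :: real assume "0 < e"
  have geometric: "1 - p (j * M) \<le> r ^ j * (1 - p 0)" for j
  proof (induction j)
    case (Suc j)
    have "1 - p (Suc j * M) \<le> r * (1 - p (j * M))"
      using contract[of "j * M"] by (simp add: add.commute)
    also have "\<dots> \<le> r * (r ^ j * (1 - p 0))" using Suc r(1) by (rule mult_left_mono)
    finally show ?case by simp
  qed simp
  have "(\<lambda>j. r ^ j * (1 - p 0)) \<longlonglongrightarrow> 0"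
    using r by (intro tendsto_mult_left_zero LIMSEQ_power_zero) auto
  then obtain j where "norm (r ^ j * (1 - p 0) - 0) < e" using \<open>0 < e\<close> LIMSEQ_D by blast
  then have j: "r ^ j * (1 - p 0) < e" by (simp add: abs_less_iff)
  show "\<exists>K. \<forall>k\<ge>K. norm (p k - 1) < e"
  proof (intro exI allI impI)
    fix k assume "j * M \<le> k"
    then have "p (j * M) \<le> p k" using inc by (simp add: incseq_def)
    then show "norm (p k - 1) < e" using geometric[of j] le1[of k] j by simp
  qed
qed

lemma cluster_has_neighbour:
  assumes c: "is_cluster n E X S" and s: "s \<in> S"
  shows "\<exists>t\<in>S. E s t"
proof -
  have card_S: "2 \<le> card S" and conn: "induced_connected E S"
    using c by (auto simp: is_cluster_def conn_family_def)
  obtain t where t: "t \<in> S" "t \<noteq> s"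
  proof -
    have "\<not> S \<subseteq> {s}"
    proof
      assume "S \<subseteq> {s}"
      then have "card S \<le> card {s}" by (intro card_mono) auto
      then show False using card_S by simp
    qed
    then show ?thesis using that by blast
  qed
  have "(\<lambda>a b. a \<in> S \<and> b \<in> S \<and> E a b)\<^sup>*\<^sup>* s t"
    using conn s t by (auto simp: induced_connected_def)
  then show ?thesis using t(2) by (cases rule: converse_rtranclpE) auto
qed

lemma not_indep_if_cluster:
  assumes c: "is_cluster n E X S"
  shows "\<not> indep_set n E X"
proof -
  have "S \<noteq> {}" using c by (auto simp: is_cluster_def conn_family_def)
  then obtain s where s: "s \<in> S" by blast
  then obtain t where "t \<in> S" "E s t" using cluster_has_neighbour[OF c] by blast
  then show ?thesis using c s by (auto simp: indep_set_def is_cluster_def)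
qed

lemma rtranclp_within_reachable:
  assumes "r\<^sup>*\<^sup>* u w"
  shows "(\<lambda>a b. r\<^sup>*\<^sup>* u a \<and> r\<^sup>*\<^sup>* u b \<and> r a b)\<^sup>*\<^sup>* u w"
  using assms
proof (induction rule: rtranclp_induct)
  case (step y z)
  have "r\<^sup>*\<^sup>* u z" using step(1,2) by (rule rtranclp.rtrancl_into_rtrancl)
  with step show ?case by (simp add: rtranclp.rtrancl_into_rtrancl)
qed simp

lemma occupied_component_is_cluster:
  assumes sg: "simple_graph n E" and X: "X \<subseteq> vset n"
    and uv: "u \<in> X" "v \<in> X" "E u v"
  defines "r \<equiv> \<lambda>a b. a \<in> X \<and> b \<in> X \<and> E a b"
  shows "is_cluster n E X {x. r\<^sup>*\<^sup>* u x}"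
proof -
  define C where "C = {x. r\<^sup>*\<^sup>* u x}"
  have sym_r: "symp r" using sg by (auto simp: r_def simple_graph_def symp_def)
  have CX: "C \<subseteq> X"
  proof
    fix x assume "x \<in> C"
    then have "r\<^sup>*\<^sup>* u x" by (simp add: C_def)
    then show "x \<in> X" using uv(1) by (induction rule: rtranclp_induct) (auto simp: r_def)
  qed
  have "r u v" using uv by (simp add: r_def)
  then have "u \<in> C" "v \<in> C" by (simp_all add: C_def r_into_rtranclp)
  moreover have "u \<noteq> v" using uv(3) sg by (auto simp: simple_graph_def)
  moreover have "finite C"
    using finite_subset[OF subset_trans[OF CX X]] by (simp add: vset_def)
  ultimately have card_C: "2 \<le> card C"
    using card_mono[of C "{u, v}"] by simp
  have conn: "induced_connected E C"
    unfolding induced_connected_def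
  proof (intro ballI)
    fix a b assume "a \<in> C" "b \<in> C"
    define rC where "rC = (\<lambda>a b. r\<^sup>*\<^sup>* u a \<and> r\<^sup>*\<^sup>* u b \<and> r a b)"
    have "symp rC" using sym_r by (auto simp: rC_def symp_def)
    moreover have "rC\<^sup>*\<^sup>* u a" "rC\<^sup>*\<^sup>* u b"
      using \<open>a \<in> C\<close> \<open>b \<in> C\<close> rtranclp_within_reachable by (auto simp: C_def rC_def)
    ultimately have "rC\<^sup>*\<^sup>* a b" using sympD[OF symp_rtranclp] rtranclp_trans by metis
    moreover have "rC \<le> (\<lambda>a b. a \<in> C \<and> b \<in> C \<and> E a b)" by (auto simp: rC_def C_def r_def)
    ultimately show "(\<lambda>a b. a \<in> C \<and> b \<in> C \<and> E a b)\<^sup>*\<^sup>* a b"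
      using rtranclp_mono by blast
  qed
  have "bdry n E C \<inter> X = {}"
  proof (rule ccontr)
    assume "bdry n E C \<inter> X \<noteq> {}"
    then obtain b c where "b \<in> X" "b \<notin> C" "c \<in> C" "E c b" by (auto simp: bdry_def)
    moreover from this have "r c b" using CX by (auto simp: r_def)
    ultimately show False by (auto simp: C_def intro: rtranclp.rtrancl_into_rtrancl)
  qed
  then show ?thesis using CX X card_C conn
    by (auto simp: is_cluster_def conn_family_def C_def)
qed

lemma indep_iff_clusters_empty:
  assumes sg: "simple_graph n E" and X: "X \<subseteq> vset n"
  shows "indep_set n E X \<longleftrightarrow> clusters n E X = {}"
proof
  assume "indep_set n E X"
  then show "clusters n E X = {}" using not_indep_if_cluster by (auto simp: clusters_def)
next
  assume no_cluster: "clusters n E X = {}"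
  show "indep_set n E X"
  proof (rule ccontr)
    assume "\<not> indep_set n E X"
    then obtain u v where "u \<in> X" "v \<in> X" "E u v" using X by (auto simp: indep_set_def)
    then show False
      using occupied_component_is_cluster[OF sg X] no_cluster by (auto simp: clusters_def)
  qed
qed

definition nbr_closed :: "(nat \<Rightarrow> nat \<Rightarrow> bool) \<Rightarrow> nat set \<Rightarrow> nat set \<Rightarrow> bool" where
  "nbr_closed E X R \<longleftrightarrow> (\<forall>v \<in> R \<inter> X. \<forall>u. E v u \<longrightarrow> u \<in> R)"

text \<open>A cluster of X cannot leave R: an edge of it outside R would lie in the independent set J.
  Being closed under the neighbourhoods of the vertices of X in R, R then also contains the
  boundary of the cluster, and X and X' agree there.\<close>

lemma is_cluster_transfer:
  assumes sg: "simple_graph n E" and closed: "nbr_closed E X R"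
    and agree: "X \<inter> R = X' \<inter> R" and outside: "X - R \<subseteq> J" and J: "indep_set n E J"
    and c: "is_cluster n E X S"
  shows "is_cluster n E X' S"
proof -
  have SX: "S \<subseteq> X" and bd: "bdry n E S \<inter> X = {}" using c by (auto simp: is_cluster_def)
  have SR: "S \<subseteq> R"
  proof
    fix s assume s: "s \<in> S"
    obtain t where t: "t \<in> S" "E s t" using cluster_has_neighbour[OF c s] by blast
    have "E t s" using t(2) sg by (simp add: simple_graph_def)
    show "s \<in> R"
    proof (rule ccontr)
      assume "s \<notin> R"
      then have "t \<notin> R" using closed \<open>E t s\<close> t(1) SX by (auto simp: nbr_closed_def)
      then have "s \<in> J" "t \<in> J" using \<open>s \<notin> R\<close> s t(1) SX outside by auto
      then show False using t(2) J by (auto simp: indep_set_def)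
    qed
  qed
  have "bdry n E S \<inter> X' = {}"
  proof (rule ccontr)
    assume "bdry n E S \<inter> X' \<noteq> {}"
    then obtain b s where b: "b \<in> bdry n E S" "b \<in> X'" "s \<in> S" "E s b" by (auto simp: bdry_def)
    then have "b \<in> R" using closed SR SX by (auto simp: nbr_closed_def)
    then show False using b(1,2) bd agree by blast
  qed
  then show ?thesis using c SR SX agree by (auto simp: is_cluster_def)
qed

lemma clusters_eq_if_agree:
  assumes sg: "simple_graph n E" and closed: "nbr_closed E X R" and agree: "X \<inter> R = X' \<inter> R"
    and "X - R \<subseteq> I" "indep_set n E I" and "X' - R \<subseteq> I'" "indep_set n E I'"
  shows "clusters n E X = clusters n E X'"
proof -
  have "nbr_closed E X' R" using closed agree by (auto simp: nbr_closed_def)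
  then show ?thesis
    using is_cluster_transfer[OF sg closed agree] is_cluster_transfer[OF sg _ agree[symmetric]]
      assms(4-7) unfolding clusters_def by blast
qed

locale prs_setting =
  fixes n :: nat and E :: "nat \<Rightarrow> nat \<Rightarrow> bool" and lam :: real
    and f :: "nat set set \<Rightarrow> nat set"
  assumes sg: "simple_graph n E" and lam: "lam > 0" and cf: "choice_fun n E f"
begin

abbreviation "V \<equiv> vset n"
abbreviation "indep \<equiv> indep_set n E"
abbreviation "step \<equiv> prs_step n E lam f"
abbreviation "state \<equiv> prs_state n E lam f"

definition chosen_cluster :: "nat set \<Rightarrow> nat set" where
  "chosen_cluster X = f (clusters n E X)"

definition resample_set :: "nat set \<Rightarrow> nat set" where
  "resample_set X = clos n E (chosen_cluster X)"

lemma finite_V: "finite V"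
  by (simp add: vset_def)

lemma finite_subset_V: "A \<subseteq> V \<Longrightarrow> finite A"
  using finite_V finite_subset by blast

lemma chosen_cluster_is_cluster:
  assumes "X \<subseteq> V" "\<not> indep X"
  shows "is_cluster n E X (chosen_cluster X)"
proof -
  have "clusters n E X \<noteq> {}" using assms indep_iff_clusters_empty[OF sg] by blast
  moreover have "clusters n E X \<subseteq> conn_family n E" by (auto simp: clusters_def is_cluster_def)
  ultimately have "f (clusters n E X) \<in> clusters n E X" using cf by (simp add: choice_fun_def)
  then show ?thesis by (simp add: chosen_cluster_def clusters_def)
qed

lemma resample_set_subset:
  assumes "X \<subseteq> V" "\<not> indep X"
  shows "resample_set X \<subseteq> V"
  using chosen_cluster_is_cluster[OF assms]
  by (auto simp: resample_set_def clos_def bdry_def is_cluster_def conn_family_def)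

lemma step_indep: "indep X \<Longrightarrow> step X = return_pmf X"
  by (simp add: prs_step_def)

lemma step_not_indep:
  "\<not> indep X \<Longrightarrow>
     step X = map_pmf (\<lambda>Y. (X - resample_set X) \<union> Y) (prod_sample lam (resample_set X))"
  by (simp add: prs_step_def resample_set_def chosen_cluster_def Let_def)

primrec run :: "nat \<Rightarrow> nat set \<Rightarrow> nat set pmf" where
  "run 0 X = return_pmf X"
| "run (Suc k) X = bind_pmf (step X) (run k)"

lemma run_0: "run 0 = return_pmf"
  by (rule ext) simp

lemma run_indep: "indep X \<Longrightarrow> run k X = return_pmf X"
  by (induction k) (simp_all add: step_indep bind_return_pmf)

lemma run_Suc_not_indep:
  "\<not> indep X \<Longrightarrow>
     run (Suc k) X = bind_pmf (prod_sample lam (resample_set X)) (\<lambda>Y. run k ((X - resample_set X) \<union> Y))"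
  by (simp add: step_not_indep bind_map_pmf)

lemma run_Suc_right: "run (Suc k) X = bind_pmf (run k X) step"
proof (induction k arbitrary: X)
  case (Suc k)
  have IH: "run (Suc k) = (\<lambda>Y. bind_pmf (run k Y) step)" by (rule ext) (rule Suc.IH)
  have "run (Suc (Suc k)) X = bind_pmf (step X) (\<lambda>Y. bind_pmf (run k Y) step)"
    by (simp only: run.simps(2) IH)
  also have "\<dots> = bind_pmf (bind_pmf (step X) (run k)) step"
    by (simp only: bind_assoc_pmf)
  finally show ?case by (simp only: run.simps(2))
qed (simp add: run_0 bind_return_pmf bind_return_pmf')

lemma prs_state_add: "state (k + m) = bind_pmf (state k) (run m)"
proof (induction m)
  case (Suc m)
  have run_Suc: "run (Suc m) = (\<lambda>X. bind_pmf (run m X) step)" by (rule ext) (rule run_Suc_right)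
  have "state (k + Suc m) = bind_pmf (bind_pmf (state k) (run m)) step"
    by (simp only: add_Suc_right prs_state.simps(2) Suc.IH)
  then show ?case by (simp only: bind_assoc_pmf run_Suc)
qed (simp add: bind_return_pmf')

lemma prs_state_eq_run: "state k = bind_pmf (prod_sample lam V) (run k)"
  using prs_state_add[of 0 k] by simp

lemma set_pmf_run: "X \<subseteq> V \<Longrightarrow> set_pmf (run k X) \<subseteq> Pow V"
proof (induction k arbitrary: X)
  case (Suc k)
  show ?case
  proof (cases "indep X")
    case False
    have "(X - resample_set X) \<union> Y \<subseteq> V" if "Y \<in> set_pmf (prod_sample lam (resample_set X))" for Y
      using that Suc.prems resample_set_subset[OF Suc.prems False] set_pmf_prod_sample by blast
    then show ?thesis using Suc.IH by (auto simp only: run_Suc_not_indep[OF False] set_bind_pmf)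
  next
    case True
    then show ?thesis using Suc.prems by (simp only: run_indep) auto
  qed
qed simp

lemma set_pmf_state: "set_pmf (state k) \<subseteq> Pow V"
  using set_pmf_prod_sample set_pmf_run
  by (auto simp only: prs_state_eq_run set_bind_pmf) blast

text \<open>run_weight k X R I is the probability that k iterations started in X end in I while the
  union of the resampled closures is exactly R.\<close>

primrec run_weight :: "nat \<Rightarrow> nat set \<Rightarrow> nat set \<Rightarrow> nat set \<Rightarrow> real" where
  "run_weight 0 X R I = (if X = I \<and> R = {} then 1 else 0)"
| "run_weight (Suc k) X R I =
     (if indep X then (if X = I \<and> R = {} then 1 else 0)
      else (\<Sum>R' \<in> {R' \<in> Pow V. resample_set X \<union> R' = R}. \<Sum>Y \<in> Pow (resample_set X).
              prod_weight lam (resample_set X) Y * run_weight k ((X - resample_set X) \<union> Y) R' I))"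

lemma run_weight_nonneg: "run_weight k X R I \<ge> 0"
  by (induction k arbitrary: X R) (auto intro!: sum_nonneg mult_nonneg_nonneg prod_weight_nonneg lam)

lemma pmf_run_Suc:
  assumes X: "X \<subseteq> V" "\<not> indep X"
  defines "T \<equiv> resample_set X"
  shows "pmf (run (Suc k) X) I = (\<Sum>Y\<in>Pow T. prod_weight lam T Y * pmf (run k ((X - T) \<union> Y)) I)"
proof -
  have "finite T" using finite_subset_V[OF resample_set_subset[OF X]] by (simp add: T_def)
  then show ?thesis
    unfolding run_Suc_not_indep[OF X(2)] T_def[symmetric]
    by (simp add: pmf_bind_pmf_sum[OF _ set_pmf_prod_sample] pmf_prod_sample lam)
qed

lemma sum_run_weight:
  "X \<subseteq> V \<Longrightarrow> (\<Sum>R\<in>Pow V. run_weight k X R I) = pmf (run k X) I"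
proof (induction k arbitrary: X)
  case 0
  then show ?case using finite_V by (simp add: sum.delta' indicator_def)
next
  case (Suc k)
  show ?case
  proof (cases "indep X")
    case True
    then show ?thesis using finite_V by (simp only: run_indep[OF True]) (simp add: sum.delta' indicator_def)
  next
    case False
    define T where "T = resample_set X"
    define w where "w R' = (\<Sum>Y\<in>Pow T. prod_weight lam T Y * run_weight k ((X - T) \<union> Y) R' I)" for R'
    have T: "T \<subseteq> V" using resample_set_subset[OF Suc.prems False] by (simp add: T_def)
    have "(\<Sum>R\<in>Pow V. run_weight (Suc k) X R I) = (\<Sum>R\<in>Pow V. \<Sum>R' \<in> {R' \<in> Pow V. T \<union> R' = R}. w R')"
      using False by (simp add: T_def w_def)
    also have "\<dots> = (\<Sum>R'\<in>Pow V. w R')"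
      using finite_V T by (intro sum.group) auto
    also have "\<dots> = (\<Sum>Y\<in>Pow T. prod_weight lam T Y * (\<Sum>R'\<in>Pow V. run_weight k ((X - T) \<union> Y) R' I))"
      unfolding w_def by (simp add: sum.swap[of _ "Pow V"] sum_distrib_left)
    also have "\<dots> = (\<Sum>Y\<in>Pow T. prod_weight lam T Y * pmf (run k ((X - T) \<union> Y)) I)"
    proof (rule sum.cong[OF refl])
      fix Y assume "Y \<in> Pow T"
      then have "(X - T) \<union> Y \<subseteq> V" using Suc.prems T by auto
      then show "prod_weight lam T Y * (\<Sum>R'\<in>Pow V. run_weight k ((X - T) \<union> Y) R' I)
          = prod_weight lam T Y * pmf (run k ((X - T) \<union> Y)) I"
        by (simp only: Suc.IH)
    qed
    also have "\<dots> = pmf (run (Suc k) X) I"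
      using pmf_run_Suc[OF Suc.prems False] by (simp add: T_def)
    finally show ?thesis .
  qed
qed

text \<open>R stays closed under the neighbourhoods of occupied vertices because the boundary of a
  cluster is unoccupied and the neighbours of a cluster vertex lie in its closure.\<close>

lemma run_weight_support:
  assumes "X \<subseteq> V" "run_weight k X R I \<noteq> 0"
  shows "X - R = I - R \<and> nbr_closed E X R"
  using assms
proof (induction k arbitrary: X R)
  case 0
  then show ?case by (simp add: nbr_closed_def split: if_splits)
next
  case (Suc k)
  show ?case
  proof (cases "indep X")
    case True
    then show ?thesis using Suc.prems by (simp add: nbr_closed_def split: if_splits)
  next
    case False
    define S where "S = chosen_cluster X"
    define T where "T = resample_set X"
    have "(\<Sum>R' \<in> {R' \<in> Pow V. T \<union> R' = R}. \<Sum>Y\<in>Pow T.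
        prod_weight lam T Y * run_weight k ((X - T) \<union> Y) R' I) \<noteq> 0"
      using Suc.prems(2) False by (simp add: T_def)
    from sum.not_neutral_contains_not_neutral[OF this] obtain R'
      where R': "R' \<subseteq> V" "T \<union> R' = R"
      and "(\<Sum>Y\<in>Pow T. prod_weight lam T Y * run_weight k ((X - T) \<union> Y) R' I) \<noteq> 0"
      by blast
    from sum.not_neutral_contains_not_neutral[OF this(3)] obtain Y
      where Y: "Y \<in> Pow T" and "prod_weight lam T Y * run_weight k ((X - T) \<union> Y) R' I \<noteq> 0"
      by blast
    then have nonzero: "run_weight k ((X - T) \<union> Y) R' I \<noteq> 0" by simp
    have "(X - T) \<union> Y \<subseteq> V"
      using Suc.prems(1) Y resample_set_subset[OF Suc.prems(1) False] by (auto simp: T_def)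
    note IH = Suc.IH[OF this nonzero]
    have "X - R = ((X - T) \<union> Y) - R' - T" using Y R'(2) by auto
    also have "\<dots> = I - R" using IH R'(2) by auto
    finally have "X - R = I - R" .
    moreover have "nbr_closed E X R"
      unfolding nbr_closed_def
    proof (intro ballI allI impI)
      fix v u assume v: "v \<in> R \<inter> X" and "E v u"
      have S: "is_cluster n E X S" using chosen_cluster_is_cluster[OF Suc.prems(1) False] by (simp add: S_def)
      consider "v \<in> S" | "v \<in> T - S" | "v \<notin> T" by blast
      then show "u \<in> R"
      proof cases
        case 1
        have "u \<in> V" using \<open>E v u\<close> sg by (simp add: simple_graph_def)
        then have "u \<in> clos n E S" using 1 \<open>E v u\<close> by (auto simp: clos_def bdry_def)
        then show ?thesis using R'(2)[symmetric] by (simp add: T_def S_def resample_set_def)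
      next
        case 2
        then have "v \<in> bdry n E S" by (auto simp: T_def S_def resample_set_def clos_def)
        then show ?thesis using v S by (auto simp: is_cluster_def)
      next
        case 3
        then show ?thesis using v \<open>E v u\<close> IH R'(2)[symmetric] by (auto simp: nbr_closed_def)
      qed
    qed
    ultimately show ?thesis ..
  qed
qed

lemma run_weight_nonzero_same_clusters:
  assumes X: "X \<subseteq> V" and I: "indep I" "indep I'"
    and agree: "X \<inter> R = X' \<inter> R" and outside: "X' - R = I' - R"
    and nonzero: "run_weight k X R I \<noteq> 0"
  shows "X' \<subseteq> V" "clusters n E X' = clusters n E X"
proof -
  have X_R: "X - R = I - R" and closed: "nbr_closed E X R"
    using run_weight_support[OF X nonzero] by blast+
  show "X' \<subseteq> V" using X agree outside I(2) by (auto simp: indep_set_def)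
  show "clusters n E X' = clusters n E X"
    using clusters_eq_if_agree[OF sg closed agree _ I(1) _ I(2)] X_R outside by blast
qed

lemma resample_run_weight_swap_le:
  assumes X: "X \<subseteq> V" and T: "T \<subseteq> V" and R': "R' \<subseteq> V" and I: "indep I" "indep I'"
    and agree: "(X - T) \<inter> R' = (X' - T) \<inter> R'" and outside: "X' - (T \<union> R') = I' - (T \<union> R')"
    and IH: "\<And>Z W. Z \<subseteq> V \<Longrightarrow> Z \<inter> R' = W \<inter> R' \<Longrightarrow> W - R' = I' - R' \<Longrightarrow>
               run_weight k Z R' I * lam ^ card (I' \<inter> R') \<le> run_weight k W R' I' * lam ^ card (I \<inter> R')"
  shows "(\<Sum>Y\<in>Pow T. prod_weight lam T Y * run_weight k ((X - T) \<union> Y) R' I) * lam ^ card (I' \<inter> (T \<union> R'))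
       \<le> (\<Sum>Y\<in>Pow T. prod_weight lam T Y * run_weight k ((X' - T) \<union> Y) R' I') * lam ^ card (I \<inter> (T \<union> R'))"
proof (rule prod_weight_sum_swap_le[where F = "\<lambda>Z. run_weight k Z R' I"
      and F' = "\<lambda>Z. run_weight k Z R' I'" and B = "X - T" and B' = "X' - T"])
  have XY: "(X - T) \<union> Y \<subseteq> V" if "Y \<subseteq> T" for Y using that X T by blast
  show "finite T" "finite R'" using T R' finite_subset_V by auto
  show "(X - T \<union> Y) - R' = I - R'" if "Y \<subseteq> T" "run_weight k ((X - T) \<union> Y) R' I \<noteq> 0" for Y
    using run_weight_support[OF XY that(2)] that(1) by blast
  show "run_weight k ((X - T) \<union> Y) R' I * lam ^ card (I' \<inter> R') \<le> run_weight k W R' I' * lam ^ card (I \<inter> R')"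
    if "Y \<subseteq> T" "(X - T \<union> Y) \<inter> R' = W \<inter> R'" "W - R' = I' - R'" for Y W
    using IH[OF XY that(2,3)] that(1) .
qed (use agree outside lam run_weight_nonneg in auto)

lemma run_weight_swap:
  assumes "X \<subseteq> V" "indep I" "indep I'" "X \<inter> R = X' \<inter> R" "X' - R = I' - R"
  shows "run_weight k X R I * lam ^ card (I' \<inter> R) \<le> run_weight k X' R I' * lam ^ card (I \<inter> R)"
  using assms
proof (induction k arbitrary: X X' R)
  case 0
  show ?case
  proof (cases "X = I \<and> R = {}")
    case True
    then show ?thesis using "0.prems"(5) by simp
  qed (use lam in simp)
next
  case (Suc k)
  note XV = Suc.prems(1) and I = Suc.prems(2,3) and agree = Suc.prems(4) and outside = Suc.prems(5)
  show ?case
  proof (cases "run_weight (Suc k) X R I = 0")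
    case True
    then show ?thesis using lam run_weight_nonneg[of "Suc k" X' R I'] by simp
  next
    case False
    note same = run_weight_nonzero_same_clusters[OF XV I agree outside False]
    then have T_eq: "resample_set X' = resample_set X"
      by (simp add: resample_set_def chosen_cluster_def)
    have indep_eq: "indep X' \<longleftrightarrow> indep X"
      using indep_iff_clusters_empty[OF sg] XV same by metis
    show ?thesis
    proof (cases "indep X")
      case True
      then have "X = I" "R = {}" using False by (simp_all split: if_splits)
      then show ?thesis using True indep_eq outside by simp
    next
      case not_indep: False
      define T where "T = resample_set X"
      define Rs where "Rs = {R' \<in> Pow V. T \<union> R' = R}"
      define A where "A R' = (\<Sum>Y\<in>Pow T. prod_weight lam T Y * run_weight k ((X - T) \<union> Y) R' I)" for R'
      define B where "B R' = (\<Sum>Y\<in>Pow T. prod_weight lam T Y * run_weight k ((X' - T) \<union> Y) R' I')" for R'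
      have T: "T \<subseteq> V" using resample_set_subset[OF XV not_indep] by (simp add: T_def)
      have "A R' * lam ^ card (I' \<inter> R) \<le> B R' * lam ^ card (I \<inter> R)" if "R' \<in> Rs" for R'
      proof -
        from that have R': "R' \<subseteq> V" "R = T \<union> R'" by (auto simp: Rs_def)
        show ?thesis unfolding A_def B_def R'(2)
          by (rule resample_run_weight_swap_le[OF XV T R'(1) I _ _ Suc.IH[OF _ I]])
            (use agree outside R'(2) in auto)
      qed
      then have "(\<Sum>R'\<in>Rs. A R') * lam ^ card (I' \<inter> R) \<le> (\<Sum>R'\<in>Rs. B R') * lam ^ card (I \<inter> R)"
        by (simp add: sum_distrib_right sum_mono)
      moreover have "run_weight (Suc k) X R I = (\<Sum>R'\<in>Rs. A R')"
        using not_indep by (simp add: A_def Rs_def T_def)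
      moreover have "run_weight (Suc k) X' R I' = (\<Sum>R'\<in>Rs. B R')"
        using not_indep indep_eq T_eq by (simp add: B_def Rs_def T_def)
      ultimately show ?thesis by simp
    qed
  qed
qed

lemma pmf_state_eq_sum_run_weight:
  "pmf (state k) I = (\<Sum>R\<in>Pow V. \<Sum>Y\<in>Pow V. prod_weight lam V Y * run_weight k Y R I)"
proof -
  have "pmf (state k) I = (\<Sum>Y\<in>Pow V. prod_weight lam V Y * pmf (run k Y) I)"
    unfolding prs_state_eq_run using finite_V
    by (simp add: pmf_bind_pmf_sum[OF _ set_pmf_prod_sample] pmf_prod_sample lam)
  also have "\<dots> = (\<Sum>Y\<in>Pow V. \<Sum>R\<in>Pow V. prod_weight lam V Y * run_weight k Y R I)"
  proof (rule sum.cong[OF refl])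
    fix Y assume "Y \<in> Pow V"
    then show "prod_weight lam V Y * pmf (run k Y) I = (\<Sum>R\<in>Pow V. prod_weight lam V Y * run_weight k Y R I)"
      by (simp add: sum_run_weight sum_distrib_left[symmetric])
  qed
  also have "\<dots> = (\<Sum>R\<in>Pow V. \<Sum>Y\<in>Pow V. prod_weight lam V Y * run_weight k Y R I)"
    by (rule sum.swap)
  finally show ?thesis .
qed

lemma pmf_state_ratio_le:
  assumes I: "indep I" "indep I'"
  shows "pmf (state k) I * lam ^ card I' \<le> pmf (state k) I' * lam ^ card I"
proof -
  define G where "G J R = (\<Sum>Y\<in>Pow V. prod_weight lam V Y * run_weight k Y R J)" for J R
  have IV: "I \<subseteq> V" "I' \<subseteq> V" using I by (simp_all add: indep_set_def)
  have "G I R * lam ^ card I' \<le> G I' R * lam ^ card I" if "R \<subseteq> V" for R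
  proof -
    have "(\<Sum>Y\<in>Pow V. prod_weight lam V Y * run_weight k ({} \<union> Y) R I) * lam ^ card (I' \<inter> (V \<union> R))
      \<le> (\<Sum>Y\<in>Pow V. prod_weight lam V Y * run_weight k ({} \<union> Y) R I') * lam ^ card (I \<inter> (V \<union> R))"
    proof (rule prod_weight_sum_swap_le[where F = "\<lambda>Z. run_weight k Z R I"
          and F' = "\<lambda>Z. run_weight k Z R I'"])
      show "finite V" "finite R" using that finite_subset_V by auto
      show "{} - (V \<union> R) = I' - (V \<union> R)" using IV by blast
      show "({} \<union> Y) - R = I - R" if "Y \<subseteq> V" "run_weight k ({} \<union> Y) R I \<noteq> 0" for Y
        using run_weight_support[of Y k R I] that by simp
      show "run_weight k ({} \<union> Y) R I * lam ^ card (I' \<inter> R) \<le> run_weight k W R I' * lam ^ card (I \<inter> R)"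
        if "Y \<subseteq> V" "({} \<union> Y) \<inter> R = W \<inter> R" "W - R = I' - R" for Y W
        using run_weight_swap[of Y I I' R W k] that I by simp
    qed (auto simp: lam run_weight_nonneg)
    moreover have "I \<inter> (V \<union> R) = I" "I' \<inter> (V \<union> R) = I'" using IV by auto
    ultimately show ?thesis by (simp add: G_def)
  qed
  moreover have "pmf (state k) J = (\<Sum>R\<in>Pow V. G J R)" for J
    by (simp add: G_def pmf_state_eq_sum_run_weight)
  ultimately show ?thesis by (simp add: sum_distrib_right) (rule sum_mono, simp)
qed

lemma finite_indep: "finite {J. indep J}"
  using finite_V by (rule finite_subset[rotated, OF finite_Pow_iff[THEN iffD2]]) (auto simp: indep_set_def)

lemma pmf_state_mult_partition:
  assumes I: "indep I"
  shows "pmf (state k) I * (\<Sum>J | indep J. lam ^ card J)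
    = lam ^ card I * measure_pmf.prob (state k) {J. indep J}"
proof -
  have "pmf (state k) I * lam ^ card J = pmf (state k) J * lam ^ card I" if "indep J" for J
    using pmf_state_ratio_le[OF I that, where k = k] pmf_state_ratio_le[OF that I, where k = k]
    by linarith
  then have "pmf (state k) I * (\<Sum>J | indep J. lam ^ card J) = (\<Sum>J | indep J. pmf (state k) J) * lam ^ card I"
    by (simp add: sum_distrib_left sum_distrib_right)
  then show ?thesis by (simp add: measure_measure_pmf_finite[OF finite_indep] mult.commute)
qed

abbreviation indep_prob :: "nat set pmf \<Rightarrow> real" where
  "indep_prob M \<equiv> measure_pmf.prob M {J. indep J}"

definition escape_prob :: real where
  "escape_prob = 1 / (1 + lam) ^ n"

lemma escape_prob_pos: "0 < escape_prob"
  using lam by (simp add: escape_prob_def)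

lemma escape_prob_le_1: "escape_prob \<le> 1"
  using lam by (simp add: escape_prob_def)

lemma escape_prob_power_le_1: "escape_prob ^ m \<le> 1"
  using escape_prob_pos escape_prob_le_1 by (simp add: power_le_one)

lemma indep_prob_run_Suc:
  assumes X: "X \<subseteq> V" "\<not> indep X"
  defines "T \<equiv> resample_set X"
  shows "indep_prob (run (Suc k) X) = (\<Sum>Y\<in>Pow T. prod_weight lam T Y * indep_prob (run k ((X - T) \<union> Y)))"
proof -
  have "finite T" using finite_subset_V[OF resample_set_subset[OF X]] by (simp add: T_def)
  then show ?thesis
    unfolding run_Suc_not_indep[OF X(2)] T_def[symmetric]
    by (simp add: prob_bind_pmf_sum[OF _ set_pmf_prod_sample finite_indep] pmf_prod_sample lam)
qed

lemma indep_prob_run_indep: "indep X \<Longrightarrow> indep_prob (run k X) = 1"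
  by (simp add: run_indep)

text \<open>Resampling the chosen closure to all zeros removes at least one occupied vertex, and has
  probability at least (1 + lam)^-n.\<close>

lemma indep_prob_run_ge:
  assumes "X \<subseteq> V" "card X \<le> m"
  shows "indep_prob (run m X) \<ge> escape_prob ^ m"
  using assms
proof (induction m arbitrary: X)
  case 0
  then have "X = {}" using finite_subset_V by auto
  then show ?case by (simp add: indep_set_def)
next
  case (Suc m)
  show ?case
  proof (cases "indep X")
    case True
    then show ?thesis by (simp only: indep_prob_run_indep escape_prob_power_le_1)
  next
    case False
    define T where "T = resample_set X"
    have T: "T \<subseteq> V" using resample_set_subset[OF Suc.prems(1) False] by (simp add: T_def)
    have S: "is_cluster n E X (chosen_cluster X)"
      using chosen_cluster_is_cluster[OF Suc.prems(1) False] .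
    then have "chosen_cluster X \<noteq> {}" by (auto simp: is_cluster_def conn_family_def)
    then obtain s where "s \<in> chosen_cluster X" by blast
    then have "s \<in> X" "s \<in> T" using S by (auto simp: T_def resample_set_def clos_def is_cluster_def)
    then have "card (X - T) < card X"
      using finite_subset_V[OF Suc.prems(1)] by (intro psubset_card_mono) auto
    then have IH: "escape_prob ^ m \<le> indep_prob (run m (X - T))"
      using Suc.IH[of "X - T"] Suc.prems by auto
    have "escape_prob \<le> prod_weight lam T {}"
      using lam card_mono[OF finite_V T] by (simp add: escape_prob_def prod_weight_def frac_le vset_def)
    then have "escape_prob ^ Suc m \<le> prod_weight lam T {} * indep_prob (run m ((X - T) \<union> {}))"
      using IH escape_prob_pos by (simp add: mult_mono)
    also have "\<dots> \<le> (\<Sum>Y\<in>Pow T. prod_weight lam T Y * indep_prob (run m ((X - T) \<union> Y)))"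
      using finite_subset_V[OF T] lam
      by (intro member_le_sum) (auto intro!: mult_nonneg_nonneg prod_weight_nonneg)
    also have "\<dots> = indep_prob (run (Suc m) X)"
      using indep_prob_run_Suc[OF Suc.prems(1) False] by (simp add: T_def)
    finally show ?thesis .
  qed
qed

lemma indep_prob_state_add:
  "indep_prob (state (k + m)) = (\<Sum>X\<in>Pow V. pmf (state k) X * indep_prob (run m X))"
  unfolding prs_state_add using finite_V set_pmf_state finite_indep
  by (intro prob_bind_pmf_sum) auto

lemma indep_prob_state_eq_sum:
  "indep_prob (state k) = (\<Sum>X\<in>Pow V. pmf (state k) X * indicator {J. indep J} X)"
  using indep_prob_state_add[of k 0] by (simp add: run_0)

lemma indicator_le_indep_prob_run: "indicator {J. indep J} X \<le> indep_prob (run m X)"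
  by (cases "indep X") (simp_all add: indep_prob_run_indep)

lemma incseq_indep_prob_state: "incseq (\<lambda>k. indep_prob (state k))"
proof (rule incseq_SucI)
  fix k
  have "indep_prob (state k) = (\<Sum>X\<in>Pow V. pmf (state k) X * indicator {J. indep J} X)"
    by (rule indep_prob_state_eq_sum)
  also have "\<dots> \<le> (\<Sum>X\<in>Pow V. pmf (state k) X * indep_prob (run 1 X))"
    by (intro sum_mono mult_left_mono) (simp_all only: indicator_le_indep_prob_run pmf_nonneg)
  also have "\<dots> = indep_prob (state (Suc k))"
    using indep_prob_state_add[of k 1] by simp
  finally show "indep_prob (state k) \<le> indep_prob (state (Suc k))" .
qed

lemma indep_prob_state_contract:
  defines "q \<equiv> escape_prob ^ Suc n"
  shows "1 - indep_prob (state (k + Suc n)) \<le> (1 - q) * (1 - indep_prob (state k))"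
proof -
  have "q \<le> 1" unfolding q_def by (rule escape_prob_power_le_1)
  have "q + (1 - q) * indicator {J. indep J} X \<le> indep_prob (run (Suc n) X)" if "X \<in> Pow V" for X
  proof (cases "indep X")
    case False
    have "card X \<le> card V" using that by (intro card_mono finite_V) auto
    then have "card X \<le> Suc n" by (simp add: vset_def)
    then show ?thesis using False indep_prob_run_ge[of X "Suc n"] that by (simp add: q_def)
  qed (simp only: indep_prob_run_indep, simp)
  then have "(\<Sum>X\<in>Pow V. pmf (state k) X * (q + (1 - q) * indicator {J. indep J} X))
      \<le> indep_prob (state (k + Suc n))"
    unfolding indep_prob_state_add by (intro sum_mono mult_left_mono) auto
  moreover have "(\<Sum>X\<in>Pow V. pmf (state k) X * (q + (1 - q) * indicator {J. indep J} X))
      = q + (1 - q) * indep_prob (state k)"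
  proof -
    have "(\<Sum>X\<in>Pow V. pmf (state k) X) = 1"
      using finite_V set_pmf_state by (intro sum_pmf_eq_1) auto
    moreover have "(\<Sum>X\<in>Pow V. pmf (state k) X * (q + (1 - q) * indicator {J. indep J} X))
        = q * (\<Sum>X\<in>Pow V. pmf (state k) X)
          + (1 - q) * (\<Sum>X\<in>Pow V. pmf (state k) X * indicator {J. indep J} X)"
      by (simp add: sum.distrib sum_distrib_left distrib_left mult_ac)
    ultimately show ?thesis by (simp add: indep_prob_state_eq_sum)
  qed
  ultimately show ?thesis by (simp add: algebra_simps)
qed

lemma indep_prob_state_tendsto: "(\<lambda>k. indep_prob (state k)) \<longlonglongrightarrow> 1"
proof (rule LIMSEQ_one_if_incseq_contracting[OF incseq_indep_prob_state, where M = "Suc n"])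
  show "0 \<le> 1 - escape_prob ^ Suc n"
    using escape_prob_power_le_1[of "Suc n"] by linarith
  show "1 - escape_prob ^ Suc n < 1"
    using zero_less_power[OF escape_prob_pos, of "Suc n"] by linarith
qed (use indep_prob_state_contract in auto)

end

theorem lemma6:
  fixes n :: nat and E :: "nat \<Rightarrow> nat \<Rightarrow> bool" and lam :: real
    and f :: "nat set set \<Rightarrow> nat set"
  assumes "simple_graph n E" and "lam > 0" and "choice_fun n E f"
  shows "((\<lambda>k. measure_pmf.prob (prs_state n E lam f k) {X. indep_set n E X}) \<longlonglongrightarrow> 1)
    \<and> (\<forall>I. indep_set n E I \<longrightarrow>
           (\<lambda>k. pmf (prs_state n E lam f k) I) \<longlonglongrightarrow>
             lam ^ card I / (\<Sum>J\<in>{J. indep_set n E J}. lam ^ card J))"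
proof -
  interpret prs_setting n E lam f using assms by unfold_locales
  define Z where "Z = (\<Sum>J | indep J. lam ^ card J)"
  have "0 < Z"
    unfolding Z_def using lam
    by (intro sum_pos2[OF finite_indep, where i = "{}"]) (auto simp: indep_set_def)
  have "(\<lambda>k. pmf (state k) I) \<longlonglongrightarrow> lam ^ card I / Z" if I: "indep I" for I
  proof -
    have "pmf (state k) I = lam ^ card I * indep_prob (state k) / Z" for k
      using pmf_state_mult_partition[OF I, of k] \<open>0 < Z\<close> by (simp add: Z_def field_simps)
    moreover have "(\<lambda>k. lam ^ card I * indep_prob (state k) / Z) \<longlonglongrightarrow> lam ^ card I * 1 / Z"
      by (intro tendsto_intros indep_prob_state_tendsto) (use \<open>0 < Z\<close> in simp)
    ultimately show ?thesis by simp
  qed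
  then show ?thesis using indep_prob_state_tendsto by (simp add: Z_def)
qed

end
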